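(* Let $R$ be an $F$-finite $F$-pure ring of prime characteristic $p$ and $J$ an ideal of $R$. Then $\mathcal P(J)=\bigcap_{s\in\mathbb N}J_s$ is uniformly $F$-compatible, and it contains every uniformly $F$-compatible ideal of $R$ contained in $J$; i.e., it is the largest uniformly $F$-compatible ideal contained in $J$.
   Context: $J_e=\{f\in R\mid \varphi(f^{1/p^e})\in J \text{ for all }\varphi\in\operatorname{Hom}_R(R^{1/p^e},R)\}$; the Cartier core of $J$ is $\mathcal P(J)=\bigcap_{s\in\mathbb N}J_s$. An ideal $J$ is uniformly $F$-compatible if $\varphi(J^{1/p^e})\subseteq J$ for every $e>0$ and every $\varphi\in\operatorname{Hom}_R(R^{1/p^e},R)$. *)

theory Defs
  imports Main "HOL-Computational_Algebra.Primes"
begin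

definition is_ideal :: "'a::comm_ring_1 set \<Rightarrow> bool" where
  "is_ideal I \<longleftrightarrow> 0 \<in> I \<and> (\<forall>x\<in>I. \<forall>y\<in>I. x + y \<in> I) \<and> (\<forall>r. \<forall>x\<in>I. r * x \<in> I)"

(* Hom_R(R^{1/p^e}, R), written via the identification R^{1/p^e} = F^e_* R:
   a map phi : R -> R is R-linear from F^e_* R to R iff it is additive and
   phi (r^(p^e) * x) = r * phi x.  Then "phi(f^{1/p^e})" is "phi f". *)
definition frob_hom :: "nat \<Rightarrow> nat \<Rightarrow> ('a::comm_ring_1 \<Rightarrow> 'a) set" where
  "frob_hom p e = {\<phi>. (\<forall>x y. \<phi> (x + y) = \<phi> x + \<phi> y) \<and>
                        (\<forall>r x. \<phi> (r ^ (p ^ e) * x) = r * \<phi> x)}"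

(* F-finite: F_* R is a finitely generated R-module, i.e. R is finitely generated
   as a module over R^p. *)
definition F_finite :: "nat \<Rightarrow> 'a::comm_ring_1 itself \<Rightarrow> bool" where
  "F_finite p (_::'a itself) \<longleftrightarrow>
     (\<exists>B::'a set. finite B \<and> (\<forall>x. \<exists>c. x = (\<Sum>b\<in>B. c b ^ p * b)))"

(* Purity of a module map M -> N is expressed by the standard criterion: every finite
   system of R-linear equations with constants from M that is solvable in N is
   solvable in M.  Here a system sum_j a_ij X_j = m_i (i<k, j<n) is solvable in F_* R
   iff there are x_j with sum_j a_ij^p x_j = m_i^p. *)
definition F_pure :: "nat \<Rightarrow> 'a::comm_ring_1 itself \<Rightarrow> bool" where
  "F_pure p (_::'a itself) \<longleftrightarrow>
     (\<forall>(k::nat) (n::nat) (a::nat \<Rightarrow> nat \<Rightarrow> 'a) (m::nat \<Rightarrow> 'a).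
        (\<exists>x::nat \<Rightarrow> 'a. \<forall>i<k. (\<Sum>j<n. a i j ^ p * x j) = m i ^ p) \<longrightarrow>
        (\<exists>y::nat \<Rightarrow> 'a. \<forall>i<k. (\<Sum>j<n. a i j * y j) = m i))"

definition J_level :: "nat \<Rightarrow> 'a::comm_ring_1 set \<Rightarrow> nat \<Rightarrow> 'a set" where
  "J_level p J e = {f. \<forall>\<phi>\<in>frob_hom p e. \<phi> f \<in> J}"

definition cartier_core :: "nat \<Rightarrow> 'a::comm_ring_1 set \<Rightarrow> 'a set" where
  "cartier_core p J = (\<Inter>s. J_level p J s)"

definition unif_F_compatible :: "nat \<Rightarrow> 'a::comm_ring_1 set \<Rightarrow> bool" where
  "unif_F_compatible p J \<longleftrightarrow> is_ideal J \<and>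
     (\<forall>e>0. \<forall>\<phi>\<in>frob_hom p e. \<forall>x\<in>J. \<phi> x \<in> J)"

end

theory Submission
  imports Defs
begin

(* Hom_R(F^e_* R, R) composed with Hom_R(F^s_* R, R) lands in Hom_R(F^(e+s)_* R, R), so a map
   of level e sends J_(e+s) into J_s; intersecting over s shows that P(J) is stable under
   all such maps.  Conversely, an ideal stable under all of them is mapped into itself and
   hence into J, i.e. it lies in every J_s. *)

lemma frob_hom_add: "\<phi> \<in> frob_hom p e \<Longrightarrow> \<phi> (x + y) = \<phi> x + \<phi> y"
  unfolding frob_hom_def by blast

lemma frob_hom_scale: "\<phi> \<in> frob_hom p e \<Longrightarrow> \<phi> (r ^ (p ^ e) * x) = r * \<phi> x"
  unfolding frob_hom_def by blast

lemma frob_hom_zero: "\<phi> \<in> frob_hom p e \<Longrightarrow> \<phi> 0 = 0"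
  using frob_hom_add[of \<phi> p e 0 0] by simp

lemma frob_hom_comp:
  assumes "\<phi> \<in> frob_hom p e" and "\<psi> \<in> frob_hom p s"
  shows "\<psi> \<circ> \<phi> \<in> frob_hom p (e + s)"
proof -
  have "r ^ (p ^ (e + s)) = (r ^ (p ^ s)) ^ (p ^ e)" for r :: 'a
    by (simp add: power_add power_mult[symmetric] mult.commute)
  then show ?thesis
    using assms unfolding frob_hom_def by auto
qed

lemma frob_hom_premult:
  assumes "\<phi> \<in> frob_hom p e"
  shows "(\<lambda>y. \<phi> (r * y)) \<in> frob_hom p e"
proof -
  have "\<phi> (r * (t ^ (p ^ e) * x)) = t * \<phi> (r * x)" for t x
    using frob_hom_scale[OF assms, of t "r * x"] by (simp add: mult.left_commute)
  then show ?thesis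
    using frob_hom_add[OF assms] unfolding frob_hom_def by (simp add: distrib_left)
qed

lemma id_in_frob_hom_0: "id \<in> frob_hom p 0"
  unfolding frob_hom_def by simp

lemma frob_hom_0_eq_mult: "\<phi> \<in> frob_hom p 0 \<Longrightarrow> \<phi> x = \<phi> 1 * x"
  using frob_hom_scale[of \<phi> p 0 x 1] by (simp add: mult.commute)

lemma is_ideal_INT: "(\<And>s. is_ideal (I s)) \<Longrightarrow> is_ideal (\<Inter>s. I s)"
  unfolding is_ideal_def by auto

lemma is_ideal_J_level:
  assumes "is_ideal J"
  shows "is_ideal (J_level p J e)"
  unfolding is_ideal_def J_level_def
proof (intro conjI ballI allI CollectI)
  show "\<phi> 0 \<in> J" if "\<phi> \<in> frob_hom p e" for \<phi>
    using that assms by (simp add: frob_hom_zero is_ideal_def)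
  show "\<phi> (x + y) \<in> J"
    if "x \<in> {f. \<forall>\<phi>\<in>frob_hom p e. \<phi> f \<in> J}" "y \<in> {f. \<forall>\<phi>\<in>frob_hom p e. \<phi> f \<in> J}"
      and "\<phi> \<in> frob_hom p e" for x y \<phi>
    using that assms by (simp add: frob_hom_add is_ideal_def)
  show "\<phi> (r * x) \<in> J"
    if "x \<in> {f. \<forall>\<phi>\<in>frob_hom p e. \<phi> f \<in> J}" and "\<phi> \<in> frob_hom p e" for r x \<phi>
    using bspec[OF that(1)[unfolded mem_Collect_eq] frob_hom_premult[OF that(2)]] by simp
qed

lemma is_ideal_cartier_core: "is_ideal J \<Longrightarrow> is_ideal (cartier_core p J)"
  unfolding cartier_core_def by (intro is_ideal_INT is_ideal_J_level)

lemma J_level_0_subset: "J_level p J 0 \<subseteq> J"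
  unfolding J_level_def using id_in_frob_hom_0 by fastforce

lemma cartier_core_subset: "cartier_core p J \<subseteq> J"
  unfolding cartier_core_def using J_level_0_subset by blast

lemma frob_hom_J_level:
  assumes "\<phi> \<in> frob_hom p e" and "x \<in> J_level p J (e + s)"
  shows "\<phi> x \<in> J_level p J s"
  unfolding J_level_def
proof (intro CollectI ballI)
  fix \<psi> :: "'a \<Rightarrow> 'a" assume "\<psi> \<in> frob_hom p s"
  with assms(1) have "\<psi> \<circ> \<phi> \<in> frob_hom p (e + s)"
    by (rule frob_hom_comp)
  with assms(2) show "\<psi> (\<phi> x) \<in> J"
    unfolding J_level_def by auto
qed

lemma frob_hom_cartier_core:
  assumes "\<phi> \<in> frob_hom p e" and "x \<in> cartier_core p J"
  shows "\<phi> x \<in> cartier_core p J"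
proof -
  have "\<phi> x \<in> J_level p J s" for s
    using assms(2) unfolding cartier_core_def by (intro frob_hom_J_level[OF assms(1)]) blast
  then show ?thesis
    unfolding cartier_core_def by blast
qed

lemma unif_F_compatible_cartier_core:
  "is_ideal J \<Longrightarrow> unif_F_compatible p (cartier_core p J)"
  unfolding unif_F_compatible_def
  by (simp add: is_ideal_cartier_core frob_hom_cartier_core)

text \<open>Level 0 is excluded in the definition of uniform F-compatibility, but there the maps are
  multiplications, which preserve any ideal.\<close>

lemma unif_F_compatibleD:
  assumes "unif_F_compatible p I" and "\<phi> \<in> frob_hom p e" and "x \<in> I"
  shows "\<phi> x \<in> I"
proof (cases "e = 0")
  case True
  with assms(2) have "\<phi> \<in> frob_hom p 0"
    by simp
  then have "\<phi> x = \<phi> 1 * x"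
    by (rule frob_hom_0_eq_mult)
  then show ?thesis
    using assms unfolding unif_F_compatible_def is_ideal_def by simp
next
  case False
  with assms show ?thesis
    unfolding unif_F_compatible_def by simp
qed

lemma unif_F_compatible_subset_cartier_core:
  assumes "unif_F_compatible p I" and "I \<subseteq> J"
  shows "I \<subseteq> cartier_core p J"
proof
  fix x assume "x \<in> I"
  then have "\<phi> x \<in> J" if "\<phi> \<in> frob_hom p s" for \<phi> s
    using unif_F_compatibleD[OF assms(1) that] assms(2) by blast
  then show "x \<in> cartier_core p J"
    unfolding cartier_core_def J_level_def by blast
qed

theorem mainTheorem8:
  fixes J :: "'a::comm_ring_1 set" and p :: nat
  assumes "prime p" and "CHAR('a) = p"
    and "F_finite p TYPE('a)" and "F_pure p TYPE('a)"
    and "is_ideal J"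
  shows "unif_F_compatible p (cartier_core p J)
       \<and> cartier_core p J \<subseteq> J
       \<and> (\<forall>I. unif_F_compatible p I \<and> I \<subseteq> J \<longrightarrow> I \<subseteq> cartier_core p J)"
  using unif_F_compatible_cartier_core[OF \<open>is_ideal J\<close>] cartier_core_subset
    unif_F_compatible_subset_cartier_core
  by blast

end
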